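(* Under the assumptions of Theorem 1 (with $\varepsilon>0$), let $(u,v)$ be a classical solution of the problem on $[0,T)$ with $u>0$. Let $\beta(x,t)=[\beta_2(t)-\beta_1(t)]x+\beta_1(t)$. Then there is a constant $C>0$ independent of $t$ and $T$ such that for all $t\in[0,T)$ \[ E(u,\alpha)(t)+\|(v-\beta)(t)\|^2+\int_0^t\!\!\int_0^1\frac{(u_x)^2}{u}\,dx\,d\tau+\int_0^t\varepsilon\|(v_x-\beta_x)(\tau)\|^2\,d\tau\le C . \]
   Context: Setting of Theorem 1: $\varepsilon>0$; on $(0,1)\times(0,\infty)$, $u_t-(uv)_x=u_{xx}$, $v_t-u_x=\varepsilon v_{xx}+\varepsilon(v^2)_x$, $(u,v)(x,0)=(u_0,v_0)(x)$, $u(0,t)=u(1,t)=\alpha(t)$, $v(0,t)=\beta_1(t)$, $v(1,t)=\beta_2(t)$; $u_0>0$, $(u_0,v_0)\in[H^2((0,1))]^2$ compatible with the boundary data; $\alpha,\beta_1,\beta_2$ smooth on $[0,\infty)$ with $\alpha\ge\underline\alpha>0$, $\alpha'\in W^{1,1}(\mathbb{R}_+)$, $\beta_1-\beta_2\in L^1(\mathbb{R}_+)$, $\beta_1',\beta_2'\in W^{1,1}(\mathbb{R}_+)$. The relative entropy is \[ E(u,\alpha)(t)=\int_0^1\big[(u\ln u-u)-(\alpha\ln\alpha-\alpha)-(u-\alpha)\ln\alpha\big]\,dx\ \ (\ge 0). \] $\|\cdot\|$ is the $L^2((0,1))$ norm. *)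

theory Defs
  imports "HOL-Analysis.Analysis"
begin

text \<open>Membership in the Sobolev space H^2((0,1)): f has an absolutely continuous
 derivative f1 whose derivative f2 is square integrable (and integrable).\<close>
definition H2_01 :: "(real \<Rightarrow> real) \<Rightarrow> bool" where
  "H2_01 f \<longleftrightarrow> (\<exists>f1 f2. f2 absolutely_integrable_on {0..1} \<and>
      (\<lambda>x. (f2 x)^2) integrable_on {0..1} \<and>
      (\<forall>x\<in>{0..1}. f1 x = f1 0 + integral {0..x} f2 \<and> f x = f 0 + integral {0..x} f1))"

text \<open>Smoothness on [0,infinity): a sequence of derivatives D with D 0 = g and
  D (Suc n) the (one-sided at 0) derivative of D n on [0,infinity).\<close>
definition smooth_derivs_nonneg :: "(nat \<Rightarrow> real \<Rightarrow> real) \<Rightarrow> (real \<Rightarrow> real) \<Rightarrow> bool" where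
  "smooth_derivs_nonneg D g \<longleftrightarrow> (\<forall>t\<ge>0. D 0 t = g t) \<and>
     (\<forall>n. \<forall>t\<ge>0. (D n has_real_derivative D (Suc n) t) (at t within {0..}))"

definition rel_entropy :: "(real \<Rightarrow> real) \<Rightarrow> real \<Rightarrow> real" where
  "rel_entropy w a = integral {0..1}
     (\<lambda>x. (w x * ln (w x) - w x) - (a * ln a - a) - (w x - a) * ln a)"

text \<open>Classical solution on [0,1] x [0,T) of
   u_t - (u v)_x = u_xx,  v_t - u_x = eps v_xx + eps (v^2)_x,
 with the given initial and boundary data; ux, uxx, ut, vx, vxx, vt are the
 partial derivatives of u and v.\<close>
definition classical_solution ::
  "real \<Rightarrow> (real \<Rightarrow> real) \<Rightarrow> (real \<Rightarrow> real) \<Rightarrow> (real \<Rightarrow> real) \<Rightarrow>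
   (real \<Rightarrow> real) \<Rightarrow> (real \<Rightarrow> real) \<Rightarrow> real \<Rightarrow>
   (real \<Rightarrow> real \<Rightarrow> real) \<Rightarrow> (real \<Rightarrow> real \<Rightarrow> real) \<Rightarrow>
   (real \<Rightarrow> real \<Rightarrow> real) \<Rightarrow> (real \<Rightarrow> real \<Rightarrow> real) \<Rightarrow> (real \<Rightarrow> real \<Rightarrow> real) \<Rightarrow>
   (real \<Rightarrow> real \<Rightarrow> real) \<Rightarrow> (real \<Rightarrow> real \<Rightarrow> real) \<Rightarrow> (real \<Rightarrow> real \<Rightarrow> real) \<Rightarrow> bool" where
  "classical_solution eps alpha beta1 beta2 u0 v0 T u v ux uxx ut vx vxx vt \<longleftrightarrow>
    (\<forall>t\<in>{0..<T}. \<forall>x\<in>{0..1}.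
        ((\<lambda>y. u y t) has_real_derivative ux x t) (at x within {0..1}) \<and>
        ((\<lambda>y. v y t) has_real_derivative vx x t) (at x within {0..1})) \<and>
    (\<forall>t\<in>{0<..<T}. \<forall>x\<in>{0..1}.
        ((\<lambda>y. ux y t) has_real_derivative uxx x t) (at x within {0..1}) \<and>
        ((\<lambda>y. vx y t) has_real_derivative vxx x t) (at x within {0..1}) \<and>
        ((\<lambda>s. u x s) has_real_derivative ut x t) (at t) \<and>
        ((\<lambda>s. v x s) has_real_derivative vt x t) (at t)) \<and>
    continuous_on ({0..1} \<times> {0..<T}) (\<lambda>(x,t). u x t) \<and>
    continuous_on ({0..1} \<times> {0..<T}) (\<lambda>(x,t). v x t) \<and>
    continuous_on ({0..1} \<times> {0..<T}) (\<lambda>(x,t). ux x t) \<and>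
    continuous_on ({0..1} \<times> {0..<T}) (\<lambda>(x,t). vx x t) \<and>
    continuous_on ({0..1} \<times> {0<..<T}) (\<lambda>(x,t). uxx x t) \<and>
    continuous_on ({0..1} \<times> {0<..<T}) (\<lambda>(x,t). vxx x t) \<and>
    continuous_on ({0..1} \<times> {0<..<T}) (\<lambda>(x,t). ut x t) \<and>
    continuous_on ({0..1} \<times> {0<..<T}) (\<lambda>(x,t). vt x t) \<and>
    (\<forall>t\<in>{0<..<T}. \<forall>x\<in>{0<..<1}.
        ut x t - (ux x t * v x t + u x t * vx x t) = uxx x t \<and>
        vt x t - ux x t = eps * vxx x t + eps * (2 * v x t * vx x t)) \<and>
    (\<forall>x\<in>{0..1}. u x 0 = u0 x \<and> v x 0 = v0 x) \<and>
    (\<forall>t\<in>{0..<T}. u 0 t = alpha t \<and> u 1 t = alpha t \<and> v 0 t = beta1 t \<and> v 1 t = beta2 t)"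

end

theory Submission
  imports Defs
begin

text \<open>
With \<open>w = v - \<beta>\<close>, where \<open>\<beta>\<close> interpolates the boundary values of \<open>v\<close> linearly, consider the energy
\<open>F = E(u,\<alpha>) + \<parallel>w\<parallel>\<^sup>2/2\<close>. Testing the first equation with \<open>ln u - ln \<alpha>\<close> and the second with \<open>w\<close>, and
integrating by parts (all boundary terms vanish because \<open>u = \<alpha>\<close> and \<open>w = 0\<close> at \<open>x = 0, 1\<close>), the cross terms
\<open>\<integral> v u\<^sub>x\<close> cancel and
  \<open>F' + \<integral> u\<^sub>x\<^sup>2/u + \<epsilon> \<parallel>w\<^sub>x\<parallel>\<^sup>2 = R\<close>,
where \<open>R\<close> only involves \<open>\<alpha>'/\<alpha>\<close>, \<open>\<beta>\<^sub>x\<close>, \<open>\<beta>\<^sub>t\<close>, the mass \<open>\<integral> u\<close> and moments of \<open>w\<close>. The mass is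
controlled by the entropy (pointwise, \<open>u\<close> is at most the entropy density plus \<open>e\<^sup>2 \<alpha>\<close>) and the moments by
Young's inequality, so
\<open>R \<le> g(t) (1 + F)\<close> with \<open>g\<close> built from \<open>|\<alpha>'|\<close>, \<open>|\<beta>\<^sub>2 - \<beta>\<^sub>1|\<close>, \<open>|\<beta>\<^sub>1'|\<close>, \<open>|\<beta>\<^sub>2'|\<close>, which is
integrable on \<open>[0,\<infinity>)\<close>. Gronwall's inequality for \<open>1 + F + \<integral>\<^sub>0\<^sup>t(dissipation)\<close> then gives a bound
\<open>2 (1 + F(0)) exp \<parallel>g\<parallel>\<^sub>1\<close>, independent of \<open>t\<close> and \<open>T\<close>.
\<close>

lemma continuous_on_slice:
  assumes "continuous_on (A \<times> B) (\<lambda>(x, t). f x t)" "t \<in> B"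
  shows "continuous_on A (\<lambda>x. f x t)"
proof -
  have "continuous_on A (\<lambda>x. (x, t))" by (intro continuous_intros)
  moreover have "(\<lambda>x. (x, t)) ` A \<subseteq> A \<times> B" using assms(2) by auto
  ultimately show ?thesis using continuous_on_compose2[OF assms(1), of A "\<lambda>x. (x, t)"] by simp
qed

lemma continuous_on_swap_curried:
  assumes "continuous_on (A \<times> B) (\<lambda>(x, t). f x t)" "U \<subseteq> B"
  shows "continuous_on (U \<times> A) (\<lambda>p. f (snd p) (fst p))"
  using continuous_on_subset[OF continuous_on_swap_args[OF assms(1)], of "U \<times> A"] assms(2)
  by (auto simp: case_prod_beta)

lemma continuous_on_fst_comp:
  assumes "continuous_on U g"
  shows "continuous_on (U \<times> A) (\<lambda>p. g (fst p))"
proof -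
  have "continuous_on (U \<times> A) fst" "fst ` (U \<times> A) \<subseteq> U" by (auto intro: continuous_intros)
  then show ?thesis using continuous_on_compose2[OF assms, of "U \<times> A" fst] by simp
qed

lemma continuous_on_integral_param:
  fixes f :: "real \<Rightarrow> real \<Rightarrow> real"
  assumes "continuous_on (U \<times> {a..b}) (\<lambda>p. f (fst p) (snd p))"
  shows "continuous_on U (\<lambda>t. integral {a..b} (f t))"
  using integral_continuous_on_param[of U a b f] assms by (simp add: case_prod_beta cbox_interval)

lemma has_integral_integral_continuous:
  fixes f :: "real \<Rightarrow> real"
  shows "continuous_on {a..b} f \<Longrightarrow> (f has_integral integral {a..b} f) {a..b}"
  by (intro integrable_integral integrable_continuous_interval)

lemma has_integral_real_derivative:
  fixes F f :: "real \<Rightarrow> real"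
  assumes "a \<le> b" "\<And>x. x \<in> {a..b} \<Longrightarrow> (F has_real_derivative f x) (at x within {a..b})"
  shows "(f has_integral F b - F a) {a..b}"
  using fundamental_theorem_of_calculus[of a b F f] assms
  by (simp add: has_real_derivative_iff_has_vector_derivative)

lemma has_integral_eq_on_interior:
  fixes f g :: "real \<Rightarrow> real"
  assumes "(f has_integral y) {a..b}" "\<And>x. x \<in> {a<..<b} \<Longrightarrow> g x = f x"
  shows "(g has_integral y) {a..b}"
  by (rule has_integral_spike_finite[of "{a, b}" _ g f, OF _ _ assms(1)]) (use assms(2) in auto)

lemma has_real_derivative_integral_param:
  fixes f fx :: "real \<Rightarrow> real \<Rightarrow> real"
  assumes S: "open S" "t0 \<in> S"
    and deriv: "\<And>t x. t \<in> S \<Longrightarrow> x \<in> {a..b} \<Longrightarrow> ((\<lambda>s. f s x) has_real_derivative fx t x) (at t)"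
    and cont: "\<And>t. t \<in> S \<Longrightarrow> continuous_on {a..b} (f t)"
    and cont_deriv: "continuous_on (S \<times> {a..b}) (\<lambda>p. fx (fst p) (snd p))"
  shows "((\<lambda>t. integral {a..b} (f t)) has_real_derivative integral {a..b} (fx t0)) (at t0)"
proof -
  obtain r where r: "r > 0" "cball t0 r \<subseteq> S" using S open_contains_cball by blast
  have "((\<lambda>t. integral (cbox a b) (f t)) has_real_derivative integral (cbox a b) (fx t0))
      (at t0 within cball t0 r)"
  proof (rule leibniz_rule_field_derivative)
    fix t x assume "t \<in> cball t0 r" "x \<in> cbox a b"
    then have "t \<in> S" "x \<in> {a..b}" using r(2) by (auto simp: cbox_interval)
    then show "((\<lambda>t. f t x) has_real_derivative fx t x) (at t within cball t0 r)"
      using deriv by (auto intro: has_field_derivative_at_within)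
  next
    fix t assume "t \<in> cball t0 r"
    then have "t \<in> S" using r(2) by auto
    then show "f t integrable_on cbox a b"
      using cont by (simp add: cbox_interval integrable_continuous_interval)
  next
    have "continuous_on (cball t0 r \<times> cbox a b) (\<lambda>p. fx (fst p) (snd p))"
      by (rule continuous_on_subset[OF cont_deriv]) (use r in \<open>auto simp: cbox_interval\<close>)
    then show "continuous_on (cball t0 r \<times> cbox a b) (\<lambda>(t, x). fx t x)"
      by (simp add: case_prod_beta)
  qed (use r in auto)
  moreover have "t0 \<in> interior (cball t0 r)" using r by simp
  ultimately show ?thesis by (metis at_within_interior cbox_interval)
qed

lemma gronwall_differential:
  fixes K g :: "real \<Rightarrow> real"
  assumes ab: "a \<le> b" and K: "continuous_on {a..b} K" and g: "continuous_on {a..b} g"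
    and deriv: "\<And>s. a < s \<Longrightarrow> s < b \<Longrightarrow> \<exists>K'. (K has_real_derivative K') (at s) \<and> K' \<le> g s * K s"
  shows "K b \<le> K a * exp (integral {a..b} g)"
proof -
  define G where "G s = integral {a..s} g" for s
  have G_deriv: "(G has_real_derivative g s) (at s within {a..b})" if "s \<in> {a..b}" for s
    unfolding G_def by (rule integral_has_real_derivative[OF g that])
  have G_cont: "continuous_on {a..b} G"
    using G_deriv by (meson DERIV_continuous continuous_on_eq_continuous_within)
  have "K b * exp (- G b) \<le> K a * exp (- G a)"
  proof (rule DERIV_nonpos_imp_decreasing_open[OF ab])
    show "continuous_on {a..b} (\<lambda>s. K s * exp (- G s))" by (intro continuous_intros K G_cont)
  next
    fix s assume s: "a < s" "s < b"
    then obtain K' where K': "(K has_real_derivative K') (at s)" "K' \<le> g s * K s"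
      using deriv by blast
    have "(G has_real_derivative g s) (at s)"
      using G_deriv[of s] s at_within_interior[of s "{a..b}"] by auto
    from DERIV_mult[OF K'(1) DERIV_fun_exp[OF DERIV_minus[OF this]]]
    have "((\<lambda>s. K s * exp (- G s)) has_real_derivative (K' - g s * K s) * exp (- G s)) (at s)"
      by (simp add: algebra_simps)
    moreover have "(K' - g s * K s) * exp (- G s) \<le> 0" using K'(2) by (simp add: mult_nonpos_nonneg)
    ultimately show "\<exists>y. ((\<lambda>s. K s * exp (- G s)) has_real_derivative y) (at s) \<and> y \<le> 0" by blast
  qed
  then show ?thesis by (simp add: G_def exp_minus field_simps)
qed

lemma abs_diff_le_integral_abs_derivative:
  fixes f f' :: "real \<Rightarrow> real"
  assumes deriv: "\<And>t. 0 \<le> t \<Longrightarrow> (f has_real_derivative f' t) (at t within {0..})"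
    and f': "f' absolutely_integrable_on {0..}" and t: "0 \<le> t"
  shows "\<bar>f t - f 0\<bar> \<le> integral {0..} (\<lambda>s. \<bar>f' s\<bar>)"
proof -
  have "(f' has_integral f t - f 0) {0..t}"
    by (rule has_integral_real_derivative[OF t]) (auto intro: DERIV_subset[OF deriv])
  then have "f t - f 0 = integral {0..t} f'" by (rule integral_unique[symmetric])
  moreover have "f' integrable_on {0..}" and abs_int: "(\<lambda>s. \<bar>f' s\<bar>) integrable_on {0..}"
    using f' unfolding absolutely_integrable_on_def by auto
  then have "norm (integral {0..t} f') \<le> integral {0..t} (\<lambda>s. \<bar>f' s\<bar>)"
    by (intro integral_norm_bound_integral integrable_on_subinterval) auto
  moreover have "integral {0..t} (\<lambda>s. \<bar>f' s\<bar>) \<le> integral {0..} (\<lambda>s. \<bar>f' s\<bar>)"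
    by (rule integral_subset_le[OF _ integrable_on_subinterval[OF abs_int] abs_int]) auto
  ultimately show ?thesis by simp
qed

lemma abs_le_half_one_plus_square: "\<bar>y::real\<bar> \<le> (1 + y\<^sup>2) / 2"
proof -
  have "0 \<le> (\<bar>y\<bar> - 1)\<^sup>2" by simp
  then show ?thesis by (simp add: power2_eq_square algebra_simps abs_mult_self_eq)
qed

lemma mult_le_of_abs_le:
  fixes x y X Y :: real
  assumes "\<bar>x\<bar> \<le> X" "\<bar>y\<bar> \<le> Y"
  shows "x * y \<le> X * Y"
proof -
  have "x * y \<le> \<bar>x\<bar> * \<bar>y\<bar>" by (metis abs_ge_self abs_mult)
  also have "\<dots> \<le> X * Y" using assms by (intro mult_mono) auto
  finally show ?thesis .
qed

lemma abs_integral_mult_le: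
  fixes f g :: "real \<Rightarrow> real"
  assumes ab: "a \<le> b" and f: "continuous_on {a..b} f" and g: "continuous_on {a..b} g"
    and bound: "\<And>x. x \<in> {a..b} \<Longrightarrow> \<bar>f x\<bar> \<le> c"
  shows "\<bar>integral {a..b} (\<lambda>x. f x * g x)\<bar> \<le> c * (b - a + integral {a..b} (\<lambda>x. (g x)\<^sup>2)) / 2"
proof -
  have "((\<lambda>x. (g x)\<^sup>2) has_integral integral {a..b} (\<lambda>x. (g x)\<^sup>2)) {a..b}"
    by (intro has_integral_integral_continuous continuous_intros g)
  from has_integral_divide[OF has_integral_mult_right[OF has_integral_add[OF has_integral_const_real[of 1] this]],
      of c 2]
  have majorant: "((\<lambda>x. c * (1 + (g x)\<^sup>2) / 2) has_integral c * (b - a + integral {a..b} (\<lambda>x. (g x)\<^sup>2)) / 2) {a..b}"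
    using ab by simp
  have "\<bar>f x * g x\<bar> \<le> c * (1 + (g x)\<^sup>2) / 2" if "x \<in> {a..b}" for x
  proof -
    have "\<bar>f x * g x\<bar> = \<bar>f x\<bar> * \<bar>g x\<bar>" by (simp add: abs_mult)
    also have "\<dots> \<le> c * ((1 + (g x)\<^sup>2) / 2)"
      using bound[OF that] abs_le_half_one_plus_square[of "g x"] by (intro mult_mono) auto
    finally show ?thesis by simp
  qed
  then have "norm (integral {a..b} (\<lambda>x. f x * g x)) \<le> integral {a..b} (\<lambda>x. c * (1 + (g x)\<^sup>2) / 2)"
    using majorant by (intro integral_norm_bound_integral integrable_continuous_interval continuous_intros f g)
      (auto simp: has_integral_integrable)
  then show ?thesis unfolding integral_unique[OF majorant] by simp
qed

section \<open>The entropy density\<close>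

definition entropy_density :: "real \<Rightarrow> real \<Rightarrow> real" where
  "entropy_density y a = (y * ln y - y) - (a * ln a - a) - (y - a) * ln a"

lemma entropy_density_nonneg:
  assumes "0 < y" "0 < a"
  shows "0 \<le> entropy_density y a"
proof -
  have "ln (a / y) \<le> a / y - 1" using assms by (intro ln_le_minus_one) auto
  then have "y * (ln a - ln y) \<le> y * (a / y - 1)" using assms by (simp add: ln_div)
  also have "\<dots> = a - y" using assms by (simp add: field_simps)
  finally show ?thesis unfolding entropy_density_def by (simp add: algebra_simps)
qed

text \<open>The entropy controls the mass: where \<open>y > e\<^sup>2 a\<close>, the density already exceeds \<open>y\<close>.\<close>
lemma le_entropy_density_add:
  assumes "0 < y" "0 < a"
  shows "y \<le> entropy_density y a + exp 2 * a"
proof (cases "y \<le> exp 2 * a")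
  case True
  then show ?thesis using entropy_density_nonneg[OF assms] by linarith
next
  case False
  then have "ln (exp 2 * a) < ln y" using assms by (subst ln_less_cancel_iff) auto
  then have "2 + ln a < ln y" using assms by (simp add: ln_mult)
  then have "y * 2 \<le> y * (ln y - ln a)" using assms by (intro mult_left_mono) auto
  moreover have "0 < exp 2 * a" using assms by simp
  moreover have "entropy_density y a + exp 2 * a - y = y * (ln y - ln a) - y * 2 + a + exp 2 * a"
    by (simp add: entropy_density_def algebra_simps)
  ultimately show ?thesis using assms by linarith
qed

lemma entropy_density_has_derivative:
  assumes f: "(f has_real_derivative f') (at t)" and g: "(g has_real_derivative g') (at t)"
    and pos: "0 < f t" "0 < g t"
  shows "((\<lambda>s. entropy_density (f s) (g s)) has_real_derivative
           f' * (ln (f t) - ln (g t)) - (f t - g t) * g' / g t) (at t)"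
proof -
  have "((\<lambda>s. entropy_density (f s) (g s)) has_real_derivative
      ((f' * ln (f t) + inverse (f t) * f' * f t) - f') - ((g' * ln (g t) + inverse (g t) * g' * g t) - g')
      - ((f' - g') * ln (g t) + inverse (g t) * g' * (f t - g t))) (at t)"
    unfolding entropy_density_def
    by (intro DERIV_diff DERIV_mult f g DERIV_chain'[OF f DERIV_ln] DERIV_chain'[OF g DERIV_ln] pos)
  then show ?thesis using pos by (simp add: field_simps)
qed

section \<open>Boundary data\<close>

locale boundary_data =
  fixes eps :: real and alpha beta1 beta2 alpha' beta1' beta2' :: "real \<Rightarrow> real"
    and amin amax B :: real
  assumes eps_pos: "0 < eps" and amin_pos: "0 < amin"
    and alpha_bounds: "\<And>t. 0 \<le> t \<Longrightarrow> amin \<le> alpha t \<and> alpha t \<le> amax"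
    and beta_bounds: "\<And>t. 0 \<le> t \<Longrightarrow> \<bar>beta1 t\<bar> \<le> B \<and> \<bar>beta2 t\<bar> \<le> B"
    and alpha_deriv: "\<And>t. 0 \<le> t \<Longrightarrow> (alpha has_real_derivative alpha' t) (at t within {0..})"
    and beta1_deriv: "\<And>t. 0 \<le> t \<Longrightarrow> (beta1 has_real_derivative beta1' t) (at t within {0..})"
    and beta2_deriv: "\<And>t. 0 \<le> t \<Longrightarrow> (beta2 has_real_derivative beta2' t) (at t within {0..})"
    and continuous_derivs: "continuous_on {0..} alpha'" "continuous_on {0..} beta1'"
      "continuous_on {0..} beta2'"
begin

lemma alpha_pos: "0 \<le> t \<Longrightarrow> 0 < alpha t"
  using alpha_bounds amin_pos by (meson less_le_trans)

lemma at_within_Ici_pos: "0 < t \<Longrightarrow> at t within {0..} = at (t::real)"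
  by (rule at_within_interior) (use interior_Ici[of "-1::real" 0] in simp)

lemma data_has_derivative_at:
  assumes "0 < t"
  shows "(alpha has_real_derivative alpha' t) (at t)"
    and "(beta1 has_real_derivative beta1' t) (at t)"
    and "(beta2 has_real_derivative beta2' t) (at t)"
  using alpha_deriv[of t] beta1_deriv[of t] beta2_deriv[of t] assms at_within_Ici_pos[OF assms] by auto

lemma continuous_data: "continuous_on {0..} alpha" "continuous_on {0..} beta1" "continuous_on {0..} beta2"
  using alpha_deriv beta1_deriv beta2_deriv
  by (meson DERIV_continuous atLeast_iff continuous_on_eq_continuous_within)+

definition beta_x :: "real \<Rightarrow> real" where "beta_x t = beta2 t - beta1 t"
definition beta_lin :: "real \<Rightarrow> real \<Rightarrow> real" where "beta_lin x t = beta_x t * x + beta1 t"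
definition beta_lin' :: "real \<Rightarrow> real \<Rightarrow> real" where "beta_lin' x t = (beta2' t - beta1' t) * x + beta1' t"

lemma continuous_on_beta_lin: "continuous_on S (\<lambda>x. beta_lin x t)" "continuous_on S (\<lambda>x. beta_lin' x t)"
  unfolding beta_lin_def beta_lin'_def by (intro continuous_intros)+

lemma abs_beta_lin_le:
  assumes "x \<in> {0..1}" "0 \<le> t"
  shows "\<bar>beta_lin x t\<bar> \<le> B"
proof -
  have "\<bar>beta_lin x t\<bar> = \<bar>beta2 t * x + beta1 t * (1 - x)\<bar>"
    by (simp add: beta_lin_def beta_x_def algebra_simps)
  also have "\<dots> \<le> \<bar>beta2 t\<bar> * x + \<bar>beta1 t\<bar> * (1 - x)"
    using assms(1) by (simp add: abs_mult abs_triangle_ineq[THEN order_trans])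
  also have "\<dots> \<le> B * x + B * (1 - x)"
    using assms beta_bounds by (intro add_mono mult_right_mono) auto
  finally show ?thesis by (simp add: algebra_simps)
qed

lemma abs_beta_lin'_le:
  assumes "x \<in> {0..1}"
  shows "\<bar>beta_lin' x t\<bar> \<le> \<bar>beta1' t\<bar> + \<bar>beta2' t\<bar>"
proof -
  have "\<bar>beta_lin' x t\<bar> = \<bar>beta2' t * x + beta1' t * (1 - x)\<bar>"
    by (simp add: beta_lin'_def algebra_simps)
  also have "\<dots> \<le> \<bar>beta2' t\<bar> * x + \<bar>beta1' t\<bar> * (1 - x)"
    using assms by (simp add: abs_mult abs_triangle_ineq[THEN order_trans])
  also have "\<dots> \<le> \<bar>beta2' t\<bar> + \<bar>beta1' t\<bar>"
    using assms by (intro add_mono mult_left_le) auto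
  finally show ?thesis by simp
qed

text \<open>The coefficients \<open>1 + (1 + e\<^sup>2) amax\<close> and \<open>2 (1 + B)\<close> bound \<open>|\<integral>u - \<alpha>|\<close> and
  \<open>|\<parallel>w\<parallel>\<^sup>2 + 2 \<integral>\<beta> w|\<close> relative to \<open>1 + F\<close>, the energy plus one.\<close>
definition growth_rate :: "real \<Rightarrow> real" where
  "growth_rate s = (1 + (1 + exp 2) * amax) / amin * \<bar>alpha' s\<bar>
     + (1 + (1 + exp 2) * amax + 2 * eps * (1 + B)) * \<bar>beta_x s\<bar> + \<bar>beta1' s\<bar> + \<bar>beta2' s\<bar>"

lemma amax_pos: "0 < amax"
  using alpha_bounds[of 0] amin_pos by linarith

lemma B_nonneg: "0 \<le> B"
  using beta_bounds[of 0] by linarith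

lemma growth_rate_nonneg: "0 \<le> growth_rate s"
  using amin_pos amax_pos eps_pos B_nonneg unfolding growth_rate_def
  by (intro add_nonneg_nonneg mult_nonneg_nonneg) auto

lemma continuous_growth_rate: "continuous_on {0..} growth_rate"
  unfolding growth_rate_def beta_x_def by (intro continuous_intros continuous_derivs continuous_data)

lemma growth_rate_integrable:
  assumes "alpha' absolutely_integrable_on {0..}" "beta1' absolutely_integrable_on {0..}"
    "beta2' absolutely_integrable_on {0..}" "(\<lambda>t. beta1 t - beta2 t) absolutely_integrable_on {0..}"
  shows "growth_rate integrable_on {0..}"
proof -
  have "(\<lambda>s. \<bar>beta_x s\<bar>) = (\<lambda>s. \<bar>beta1 s - beta2 s\<bar>)" by (simp add: beta_x_def abs_minus_commute)
  then show ?thesis using assms unfolding growth_rate_def absolutely_integrable_on_def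
    by (intro integrable_add integrable_on_mult_right) auto
qed

end

lemma smooth_derivs_nonneg_has_derivative:
  assumes "smooth_derivs_nonneg D g" "0 \<le> t"
  shows "(g has_real_derivative D 1 t) (at t within {0..})"
proof (rule has_field_derivative_transform_within[OF _ zero_less_one])
  show "(D 0 has_real_derivative D 1 t) (at t within {0..})"
    using assms unfolding smooth_derivs_nonneg_def by (metis One_nat_def)
qed (use assms in \<open>auto simp: smooth_derivs_nonneg_def\<close>)

lemma smooth_derivs_nonneg_continuous_derivative:
  assumes "smooth_derivs_nonneg D g"
  shows "continuous_on {0..} (D 1)"
  by (rule DERIV_continuous_on[where D="D 2"])
    (use assms in \<open>auto simp: smooth_derivs_nonneg_def numeral_2_eq_2\<close>)

lemma smooth_derivs_nonneg_abs_le: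
  assumes "smooth_derivs_nonneg D g" "D 1 absolutely_integrable_on {0..}" "0 \<le> t"
  shows "\<bar>g t\<bar> \<le> \<bar>g 0\<bar> + integral {0..} (\<lambda>s. \<bar>D 1 s\<bar>)"
  using abs_diff_le_integral_abs_derivative[OF smooth_derivs_nonneg_has_derivative[OF assms(1)] assms(2,3)]
  by linarith

lemma boundary_data_of_smooth:
  assumes eps: "0 < eps" and alpha_lower: "\<exists>a>0. \<forall>t\<ge>0. alpha t \<ge> a"
    and smooth: "smooth_derivs_nonneg A alpha" "smooth_derivs_nonneg B1 beta1" "smooth_derivs_nonneg B2 beta2"
    and integrable: "A 1 absolutely_integrable_on {0..}" "B1 1 absolutely_integrable_on {0..}"
      "B2 1 absolutely_integrable_on {0..}"
  shows "\<exists>amin amax B. boundary_data eps alpha beta1 beta2 (A 1) (B1 1) (B2 1) amin amax B"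
proof -
  obtain amin where amin: "0 < amin" "\<And>t. 0 \<le> t \<Longrightarrow> amin \<le> alpha t" using alpha_lower by auto
  define amax where "amax = \<bar>alpha 0\<bar> + integral {0..} (\<lambda>s. \<bar>A 1 s\<bar>)"
  define B where "B = \<bar>beta1 0\<bar> + \<bar>beta2 0\<bar> + integral {0..} (\<lambda>s. \<bar>B1 1 s\<bar>) + integral {0..} (\<lambda>s. \<bar>B2 1 s\<bar>)"
  have "boundary_data eps alpha beta1 beta2 (A 1) (B1 1) (B2 1) amin amax B"
  proof
    fix t :: real assume t: "0 \<le> t"
    show "amin \<le> alpha t \<and> alpha t \<le> amax"
      using amin(2)[OF t] smooth_derivs_nonneg_abs_le[OF smooth(1) integrable(1) t] unfolding amax_def by auto
    have "0 \<le> integral {0..} (\<lambda>s. \<bar>B1 1 s\<bar>)" "0 \<le> integral {0..} (\<lambda>s. \<bar>B2 1 s\<bar>)"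
      using integrable by (auto intro!: integral_nonneg simp: absolutely_integrable_on_def)
    then show "\<bar>beta1 t\<bar> \<le> B \<and> \<bar>beta2 t\<bar> \<le> B"
      using smooth_derivs_nonneg_abs_le[OF smooth(2) integrable(2) t]
        smooth_derivs_nonneg_abs_le[OF smooth(3) integrable(3) t] unfolding B_def by auto
  qed (use eps amin(1) smooth_derivs_nonneg_has_derivative[OF smooth(1)]
      smooth_derivs_nonneg_has_derivative[OF smooth(2)] smooth_derivs_nonneg_has_derivative[OF smooth(3)]
      smooth_derivs_nonneg_continuous_derivative[OF smooth(1)] smooth_derivs_nonneg_continuous_derivative[OF smooth(2)]
      smooth_derivs_nonneg_continuous_derivative[OF smooth(3)] in auto)
  then show ?thesis by blast
qed

section \<open>The energy identity\<close>

locale positive_solution = boundary_data +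
  fixes u0 v0 :: "real \<Rightarrow> real" and T :: real
    and u v ux uxx ut vx vxx vt :: "real \<Rightarrow> real \<Rightarrow> real"
  assumes solution: "classical_solution eps alpha beta1 beta2 u0 v0 T u v ux uxx ut vx vxx vt"
    and u_pos: "\<And>t x. t \<in> {0..<T} \<Longrightarrow> x \<in> {0..1} \<Longrightarrow> 0 < u x t"
begin

lemma space_derivatives:
  assumes "t \<in> {0..<T}" "x \<in> {0..1}"
  shows "((\<lambda>y. u y t) has_real_derivative ux x t) (at x within {0..1})"
    and "((\<lambda>y. v y t) has_real_derivative vx x t) (at x within {0..1})"
  using solution assms unfolding classical_solution_def by blast+

lemma second_space_derivatives:
  assumes "t \<in> {0<..<T}" "x \<in> {0..1}"
  shows "((\<lambda>y. ux y t) has_real_derivative uxx x t) (at x within {0..1})"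
    and "((\<lambda>y. vx y t) has_real_derivative vxx x t) (at x within {0..1})"
  using solution assms unfolding classical_solution_def by blast+

lemma time_derivatives:
  assumes "t \<in> {0<..<T}" "x \<in> {0..1}"
  shows "((\<lambda>s. u x s) has_real_derivative ut x t) (at t)"
    and "((\<lambda>s. v x s) has_real_derivative vt x t) (at t)"
  using solution assms unfolding classical_solution_def by blast+

lemma equations:
  assumes "t \<in> {0<..<T}" "x \<in> {0<..<1}"
  shows "ut x t = ux x t * v x t + u x t * vx x t + uxx x t"
    and "vt x t = ux x t + eps * vxx x t + eps * (2 * v x t * vx x t)"
  using solution assms unfolding classical_solution_def by (auto simp: algebra_simps)

lemma boundary_values:
  assumes "t \<in> {0..<T}"
  shows "u 0 t = alpha t" "u 1 t = alpha t" "v 0 t = beta1 t" "v 1 t = beta2 t"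
  using solution assms unfolding classical_solution_def by blast+

lemma initial_values:
  assumes "x \<in> {0..1}"
  shows "u x 0 = u0 x" "v x 0 = v0 x"
  using solution assms unfolding classical_solution_def by blast+

lemma continuous_solution:
  shows "continuous_on ({0..1} \<times> {0..<T}) (\<lambda>(x, t). u x t)" "continuous_on ({0..1} \<times> {0..<T}) (\<lambda>(x, t). v x t)"
    "continuous_on ({0..1} \<times> {0..<T}) (\<lambda>(x, t). ux x t)" "continuous_on ({0..1} \<times> {0..<T}) (\<lambda>(x, t). vx x t)"
    "continuous_on ({0..1} \<times> {0<..<T}) (\<lambda>(x, t). ut x t)" "continuous_on ({0..1} \<times> {0<..<T}) (\<lambda>(x, t). vt x t)"
  using solution unfolding classical_solution_def by blast+

lemma continuous_on_slices:
  assumes "t \<in> {0..<T}"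
  shows "continuous_on {0..1} (\<lambda>x. u x t)" "continuous_on {0..1} (\<lambda>x. v x t)"
    "continuous_on {0..1} (\<lambda>x. ux x t)" "continuous_on {0..1} (\<lambda>x. vx x t)"
proof -
  from continuous_solution(1-4) show "continuous_on {0..1} (\<lambda>x. u x t)" "continuous_on {0..1} (\<lambda>x. v x t)"
    "continuous_on {0..1} (\<lambda>x. ux x t)" "continuous_on {0..1} (\<lambda>x. vx x t)"
    using assms by (auto intro: continuous_on_slice)
qed

lemma continuous_on_time_space:
  assumes "S \<subseteq> {0..<T}"
  shows "continuous_on (S \<times> {0..1}) (\<lambda>p. u (snd p) (fst p))"
    and "continuous_on (S \<times> {0..1}) (\<lambda>p. v (snd p) (fst p))"
    and "continuous_on (S \<times> {0..1}) (\<lambda>p. ux (snd p) (fst p))"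
    and "continuous_on (S \<times> {0..1}) (\<lambda>p. vx (snd p) (fst p))"
    and "continuous_on (S \<times> {0..1}) (\<lambda>p. alpha (fst p))"
    and "continuous_on (S \<times> {0..1}) (\<lambda>p. beta1 (fst p))"
    and "continuous_on (S \<times> {0..1}) (\<lambda>p. beta2 (fst p))"
proof -
  have "S \<subseteq> {0..}" using assms by auto
  then show "continuous_on (S \<times> {0..1}) (\<lambda>p. alpha (fst p))"
    "continuous_on (S \<times> {0..1}) (\<lambda>p. beta1 (fst p))" "continuous_on (S \<times> {0..1}) (\<lambda>p. beta2 (fst p))"
    by (auto intro!: continuous_on_fst_comp continuous_on_subset[OF continuous_data(1)]
        continuous_on_subset[OF continuous_data(2)] continuous_on_subset[OF continuous_data(3)])
next
  from continuous_solution(1-4) show "continuous_on (S \<times> {0..1}) (\<lambda>p. u (snd p) (fst p))"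
    "continuous_on (S \<times> {0..1}) (\<lambda>p. v (snd p) (fst p))"
    "continuous_on (S \<times> {0..1}) (\<lambda>p. ux (snd p) (fst p))"
    "continuous_on (S \<times> {0..1}) (\<lambda>p. vx (snd p) (fst p))"
    using assms by (auto intro: continuous_on_swap_curried)
qed

lemma continuous_on_time_space_interior:
  assumes "S \<subseteq> {0<..<T}"
  shows "continuous_on (S \<times> {0..1}) (\<lambda>p. ut (snd p) (fst p))"
    and "continuous_on (S \<times> {0..1}) (\<lambda>p. vt (snd p) (fst p))"
    and "continuous_on (S \<times> {0..1}) (\<lambda>p. alpha' (fst p))"
    and "continuous_on (S \<times> {0..1}) (\<lambda>p. beta1' (fst p))"
    and "continuous_on (S \<times> {0..1}) (\<lambda>p. beta2' (fst p))"
proof -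
  have "S \<subseteq> {0..}" using assms by auto
  then show "continuous_on (S \<times> {0..1}) (\<lambda>p. alpha' (fst p))"
    "continuous_on (S \<times> {0..1}) (\<lambda>p. beta1' (fst p))" "continuous_on (S \<times> {0..1}) (\<lambda>p. beta2' (fst p))"
    by (auto intro!: continuous_on_fst_comp continuous_on_subset[OF continuous_derivs(1)]
        continuous_on_subset[OF continuous_derivs(2)] continuous_on_subset[OF continuous_derivs(3)])
next
  from continuous_solution(5,6) show "continuous_on (S \<times> {0..1}) (\<lambda>p. ut (snd p) (fst p))"
    "continuous_on (S \<times> {0..1}) (\<lambda>p. vt (snd p) (fst p))"
    using assms by (auto intro: continuous_on_swap_curried)
qed

lemma nonzero_time_space:
  assumes "S \<subseteq> {0..<T}"
  shows "\<forall>p \<in> S \<times> {0..1}. u (snd p) (fst p) \<noteq> 0" "\<forall>p \<in> S \<times> {0..1}. alpha (fst p) \<noteq> 0"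
proof -
  show "\<forall>p \<in> S \<times> {0..1}. u (snd p) (fst p) \<noteq> 0"
    using assms u_pos by (metis mem_Times_iff less_irrefl subsetD)
  show "\<forall>p \<in> S \<times> {0..1}. alpha (fst p) \<noteq> 0"
    using assms alpha_pos by (metis mem_Times_iff atLeastLessThan_iff less_irrefl subsetD)
qed


definition w :: "real \<Rightarrow> real \<Rightarrow> real" where "w x t = v x t - beta_lin x t"

definition entropy :: "real \<Rightarrow> real" where
  "entropy t = integral {0..1} (\<lambda>x. entropy_density (u x t) (alpha t))"
definition deviation :: "real \<Rightarrow> real" where "deviation t = integral {0..1} (\<lambda>x. (w x t)\<^sup>2)"
definition energy :: "real \<Rightarrow> real" where "energy t = entropy t + deviation t / 2"
definition mass :: "real \<Rightarrow> real" where "mass t = integral {0..1} (\<lambda>x. u x t)"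
definition fisher :: "real \<Rightarrow> real" where "fisher t = integral {0..1} (\<lambda>x. (ux x t)\<^sup>2 / u x t)"
definition gradient_deviation :: "real \<Rightarrow> real" where
  "gradient_deviation t = integral {0..1} (\<lambda>x. (vx x t - beta_x t)\<^sup>2)"
definition dissipation :: "real \<Rightarrow> real" where "dissipation t = fisher t + eps * gradient_deviation t"
definition cross :: "real \<Rightarrow> real" where "cross t = integral {0..1} (\<lambda>x. v x t * ux x t)"
definition moment_beta :: "real \<Rightarrow> real" where
  "moment_beta t = integral {0..1} (\<lambda>x. beta_lin x t * w x t)"
definition moment_beta' :: "real \<Rightarrow> real" where
  "moment_beta' t = integral {0..1} (\<lambda>x. beta_lin' x t * w x t)"
definition forcing :: "real \<Rightarrow> real" where
  "forcing t = (beta_x t - alpha' t / alpha t) * (mass t - alpha t)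
     + eps * beta_x t * (deviation t + 2 * moment_beta t) - moment_beta' t"

lemma beta_lin_has_derivative: "((\<lambda>y. beta_lin y t) has_real_derivative beta_x t) (at x within S)"
  unfolding beta_lin_def using DERIV_add[OF DERIV_cmult[OF DERIV_ident] DERIV_const] by simp

lemma w_has_derivative:
  assumes "t \<in> {0..<T}" "x \<in> {0..1}"
  shows "((\<lambda>y. w y t) has_real_derivative vx x t - beta_x t) (at x within {0..1})"
  unfolding w_def by (intro DERIV_diff space_derivatives(2)[OF assms] beta_lin_has_derivative)

lemma w_boundary:
  assumes "t \<in> {0..<T}"
  shows "w 0 t = 0" "w 1 t = 0"
  using boundary_values[OF assms] by (auto simp: w_def beta_lin_def beta_x_def)

lemma continuous_on_w_slice:
  assumes "t \<in> {0..<T}"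
  shows "continuous_on {0..1} (\<lambda>x. w x t)"
  unfolding w_def beta_lin_def by (intro continuous_intros continuous_on_slices assms)

lemma has_integral_densities:
  assumes t: "t \<in> {0..<T}"
  shows "((\<lambda>x. entropy_density (u x t) (alpha t)) has_integral entropy t) {0..1}"
    and "((\<lambda>x. (w x t)\<^sup>2) has_integral deviation t) {0..1}"
    and "((\<lambda>x. u x t) has_integral mass t) {0..1}"
    and "((\<lambda>x. (ux x t)\<^sup>2 / u x t) has_integral fisher t) {0..1}"
    and "((\<lambda>x. (vx x t - beta_x t)\<^sup>2) has_integral gradient_deviation t) {0..1}"
    and "((\<lambda>x. v x t * ux x t) has_integral cross t) {0..1}"
    and "((\<lambda>x. beta_lin x t * w x t) has_integral moment_beta t) {0..1}"
    and "((\<lambda>x. beta_lin' x t * w x t) has_integral moment_beta' t) {0..1}"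
proof -
  note slices = continuous_on_slices[OF t] continuous_on_w_slice[OF t]
  have nonzero: "\<forall>x\<in>{0..1}. u x t \<noteq> 0" using u_pos[OF t] by force
  show "((\<lambda>x. entropy_density (u x t) (alpha t)) has_integral entropy t) {0..1}"
    unfolding entropy_def entropy_density_def
    by (intro has_integral_integral_continuous continuous_intros slices nonzero)
  show "((\<lambda>x. (ux x t)\<^sup>2 / u x t) has_integral fisher t) {0..1}"
    unfolding fisher_def by (intro has_integral_integral_continuous continuous_intros slices nonzero)
qed (unfold deviation_def mass_def gradient_deviation_def cross_def moment_beta_def moment_beta'_def
      beta_lin_def beta_lin'_def,
     (intro has_integral_integral_continuous continuous_intros continuous_on_slices[OF t]
       continuous_on_w_slice[OF t])+)

text \<open>By the first equation \<open>u\<^sub>t = (u v + u\<^sub>x)\<^sub>x\<close>, and \<open>ln u - ln \<alpha>\<close> vanishes at both ends.\<close>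
lemma has_integral_ut_log_ratio:
  assumes t: "t \<in> {0<..<T}"
  shows "((\<lambda>x. ut x t * (ln (u x t) - ln (alpha t))) has_integral - cross t - fisher t) {0..1}"
proof -
  have t': "t \<in> {0..<T}" using t by auto
  define L where "L x = ln (u x t) - ln (alpha t)" for x
  have "((\<lambda>x. (ux x t * v x t + u x t * vx x t + uxx x t) * L x + (v x t * ux x t + (ux x t)\<^sup>2 / u x t))
      has_integral (u 1 t * v 1 t + ux 1 t) * L 1 - (u 0 t * v 0 t + ux 0 t) * L 0) {0..1}"
  proof (rule has_integral_real_derivative)
    fix x :: real assume x: "x \<in> {0..1}"
    note u_x = space_derivatives(1)[OF t' x]
    have "(L has_real_derivative inverse (u x t) * ux x t - 0) (at x within {0..1})"
      unfolding L_def by (intro DERIV_diff DERIV_chain'[OF u_x DERIV_ln] DERIV_const u_pos t' x)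
    then have "((\<lambda>y. (u y t * v y t + ux y t) * L y) has_real_derivative
        (ux x t * v x t + vx x t * u x t + uxx x t) * L x
        + (inverse (u x t) * ux x t - 0) * (u x t * v x t + ux x t)) (at x within {0..1})"
      by (intro DERIV_mult DERIV_add u_x space_derivatives(2)[OF t' x] second_space_derivatives(1)[OF t x])
    moreover have "(ux x t * v x t + vx x t * u x t + uxx x t) * L x
        + (inverse (u x t) * ux x t - 0) * (u x t * v x t + ux x t)
      = (ux x t * v x t + u x t * vx x t + uxx x t) * L x + (v x t * ux x t + (ux x t)\<^sup>2 / u x t)"
      using u_pos[OF t' x] by (simp add: field_simps power2_eq_square)
    ultimately show "((\<lambda>y. (u y t * v y t + ux y t) * L y) has_real_derivative
        (ux x t * v x t + u x t * vx x t + uxx x t) * L x + (v x t * ux x t + (ux x t)\<^sup>2 / u x t))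
        (at x within {0..1})" by simp
  qed simp
  moreover have "L 0 = 0" "L 1 = 0" using boundary_values[OF t'] by (auto simp: L_def)
  moreover have "((\<lambda>x. v x t * ux x t + (ux x t)\<^sup>2 / u x t) has_integral cross t + fisher t) {0..1}"
    by (intro has_integral_add has_integral_densities t')
  ultimately have "((\<lambda>x. (ux x t * v x t + u x t * vx x t + uxx x t) * L x + (v x t * ux x t + (ux x t)\<^sup>2 / u x t)
      - (v x t * ux x t + (ux x t)\<^sup>2 / u x t)) has_integral 0 - (cross t + fisher t)) {0..1}"
    by (intro has_integral_diff) simp_all
  then have "((\<lambda>x. (ux x t * v x t + u x t * vx x t + uxx x t) * L x) has_integral - cross t - fisher t) {0..1}"
    by simp
  then show ?thesis
    by (rule has_integral_eq_on_interior) (simp add: L_def equations(1)[OF t])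
qed


lemma entropy_has_derivative:
  assumes t: "t \<in> {0<..<T}"
  shows "(entropy has_real_derivative - cross t - fisher t - (mass t - alpha t) * alpha' t / alpha t) (at t)"
proof -
  have t': "t \<in> {0..<T}" using t by auto
  have deriv: "(entropy has_real_derivative integral {0..1}
      (\<lambda>x. ut x t * (ln (u x t) - ln (alpha t)) - (u x t - alpha t) * alpha' t / alpha t)) (at t)"
    unfolding entropy_def
  proof (rule has_real_derivative_integral_param[OF open_greaterThanLessThan t])
    fix s x :: real assume s: "s \<in> {0<..<T}" and x: "x \<in> {0..1}"
    show "((\<lambda>s. entropy_density (u x s) (alpha s)) has_real_derivative
        ut x s * (ln (u x s) - ln (alpha s)) - (u x s - alpha s) * alpha' s / alpha s) (at s)"
      using s x by (intro entropy_density_has_derivative time_derivatives data_has_derivative_at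
          u_pos alpha_pos) auto
  next
    fix s assume "s \<in> {0<..<T}"
    then have s: "s \<in> {0..<T}" by auto
    show "continuous_on {0..1} (\<lambda>x. entropy_density (u x s) (alpha s))"
      using u_pos[OF s] unfolding entropy_density_def
      by (intro continuous_intros continuous_on_slices[OF s]) force
  next
    have S: "{0<..<T} \<subseteq> {0..<T}" by auto
    show "continuous_on ({0<..<T} \<times> {0..1}) (\<lambda>p. ut (snd p) (fst p) * (ln (u (snd p) (fst p))
        - ln (alpha (fst p))) - (u (snd p) (fst p) - alpha (fst p)) * alpha' (fst p) / alpha (fst p))"
      by (intro continuous_intros continuous_on_time_space[OF S] continuous_on_time_space_interior
          nonzero_time_space[OF S]) auto
  qed
  have production: "((\<lambda>x. ut x t * (ln (u x t) - ln (alpha t)) - (u x t - alpha t) * alpha' t / alpha t)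
      has_integral - cross t - fisher t - (mass t - alpha t) * alpha' t / alpha t) {0..1}"
    using has_integral_const_real[of "alpha t" 0 1]
    by (intro has_integral_diff has_integral_divide has_integral_mult_left has_integral_ut_log_ratio t
        has_integral_densities t') simp_all
  show ?thesis using deriv unfolding integral_unique[OF production] .
qed

lemma deviation_has_derivative:
  assumes t: "t \<in> {0<..<T}"
  shows "(deviation has_real_derivative integral {0..1} (\<lambda>x. 2 * w x t * (vt x t - beta_lin' x t))) (at t)"
  unfolding deviation_def
proof (rule has_real_derivative_integral_param[OF open_greaterThanLessThan t])
  fix s x :: real assume s: "s \<in> {0<..<T}" and x: "x \<in> {0..1}"
  have "((\<lambda>s. (beta2 s - beta1 s) * x) has_real_derivative (beta2' s - beta1' s) * x) (at s)"
    using s by (intro DERIV_cmult_right DERIV_diff data_has_derivative_at) auto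
  then have "((\<lambda>s. w x s) has_real_derivative vt x s - beta_lin' x s) (at s)"
    unfolding w_def beta_lin_def beta_lin'_def beta_x_def
    using s by (intro DERIV_diff DERIV_add time_derivatives[OF s x] data_has_derivative_at) auto
  from DERIV_mult[OF this this]
  show "((\<lambda>s. (w x s)\<^sup>2) has_real_derivative 2 * w x s * (vt x s - beta_lin' x s)) (at s)"
    by (simp add: power2_eq_square algebra_simps)
next
  fix s assume "s \<in> {0<..<T}"
  then show "continuous_on {0..1} (\<lambda>x. (w x s)\<^sup>2)"
    by (intro continuous_intros continuous_on_w_slice) auto
next
  have S: "{0<..<T} \<subseteq> {0..<T}" by auto
  show "continuous_on ({0<..<T} \<times> {0..1}) (\<lambda>p. 2 * w (snd p) (fst p) * (vt (snd p) (fst p) - beta_lin' (snd p) (fst p)))"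
    unfolding w_def beta_lin_def beta_lin'_def beta_x_def
    by (intro continuous_intros continuous_on_time_space[OF S] continuous_on_time_space_interior) auto
qed

lemma has_integral_w_ux:
  assumes t: "t \<in> {0..<T}"
  shows "((\<lambda>x. w x t * ux x t) has_integral cross t + beta_x t * (mass t - alpha t)) {0..1}"
proof -
  have "((\<lambda>x. beta_x t * u x t + ux x t * beta_lin x t) has_integral
      beta_lin 1 t * u 1 t - beta_lin 0 t * u 0 t) {0..1}"
    by (rule has_integral_real_derivative)
      (auto intro: DERIV_mult[OF beta_lin_has_derivative space_derivatives(1)[OF t]])
  also have "beta_lin 1 t * u 1 t - beta_lin 0 t * u 0 t = alpha t * beta_x t"
    using boundary_values[OF t] by (simp add: beta_lin_def algebra_simps)
  finally have "((\<lambda>x. v x t * ux x t - (beta_x t * u x t + ux x t * beta_lin x t) + beta_x t * u x t)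
      has_integral cross t - alpha t * beta_x t + beta_x t * mass t) {0..1}"
    by (intro has_integral_add has_integral_diff has_integral_mult_right has_integral_densities t)
  then show ?thesis by (simp add: w_def algebra_simps)
qed

lemma has_integral_w_vxx:
  assumes t: "t \<in> {0<..<T}"
  shows "((\<lambda>x. w x t * vxx x t) has_integral - gradient_deviation t) {0..1}"
proof -
  have t': "t \<in> {0..<T}" using t by auto
  have "((\<lambda>x. (vx x t - beta_x t) * vx x t + vxx x t * w x t) has_integral w 1 t * vx 1 t - w 0 t * vx 0 t) {0..1}"
    by (rule has_integral_real_derivative)
      (auto intro: DERIV_mult[OF w_has_derivative[OF t'] second_space_derivatives(2)[OF t]])
  moreover have "((\<lambda>x. vx x t - beta_x t) has_integral w 1 t - w 0 t) {0..1}"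
    by (rule has_integral_real_derivative) (auto intro: w_has_derivative[OF t'])
  ultimately have "((\<lambda>x. ((vx x t - beta_x t) * vx x t + vxx x t * w x t) - (vx x t - beta_x t)\<^sup>2
      - beta_x t * (vx x t - beta_x t)) has_integral 0 - gradient_deviation t - beta_x t * 0) {0..1}"
    using w_boundary[OF t'] by (intro has_integral_diff has_integral_mult_right has_integral_densities t') simp_all
  then show ?thesis by (simp add: algebra_simps power2_eq_square)
qed

text \<open>A primitive of \<open>w v v\<^sub>x - \<beta>\<^sub>x (w\<^sup>2/2 + \<beta> w)\<close> is \<open>w\<^sup>3/3 + \<beta> w\<^sup>2/2\<close>, which vanishes at both ends.\<close>
lemma has_integral_w_v_vx:
  assumes t: "t \<in> {0..<T}"
  shows "((\<lambda>x. w x t * (v x t * vx x t)) has_integral beta_x t * (deviation t / 2 + moment_beta t)) {0..1}"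
proof -
  define P where "P y = (w y t)^3 / 3 + beta_lin y t * (w y t)\<^sup>2 / 2" for y
  have "((\<lambda>x. w x t * (v x t * vx x t) - beta_x t * ((w x t)\<^sup>2 / 2 + beta_lin x t * w x t)) has_integral P 1 - P 0) {0..1}"
  proof (rule has_integral_real_derivative)
    fix x :: real assume x: "x \<in> {0..1}"
    note w_x = w_has_derivative[OF t x]
    have "(P has_real_derivative of_nat 3 * ((vx x t - beta_x t) * w x t ^ (3 - Suc 0)) / 3
        + (beta_x t * (w x t)\<^sup>2 + of_nat 2 * ((vx x t - beta_x t) * w x t ^ (2 - Suc 0)) * beta_lin x t) / 2)
        (at x within {0..1})"
      unfolding P_def by (intro DERIV_add DERIV_cdivide DERIV_mult DERIV_power w_x beta_lin_has_derivative)
    then show "(P has_real_derivative w x t * (v x t * vx x t) - beta_x t * ((w x t)\<^sup>2 / 2 + beta_lin x t * w x t))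
        (at x within {0..1})"
      by (rule DERIV_cong) (simp add: w_def field_simps power2_eq_square power3_eq_cube)
  qed simp
  also have "P 1 - P 0 = 0" using w_boundary[OF t] by (simp add: P_def)
  finally have "((\<lambda>x. (w x t * (v x t * vx x t) - beta_x t * ((w x t)\<^sup>2 / 2 + beta_lin x t * w x t))
      + beta_x t * ((w x t)\<^sup>2 / 2 + beta_lin x t * w x t))
      has_integral 0 + beta_x t * (deviation t / 2 + moment_beta t)) {0..1}"
    by (intro has_integral_add has_integral_mult_right has_integral_divide has_integral_densities t)
  then show ?thesis by simp
qed


lemma has_integral_deviation_production:
  assumes t: "t \<in> {0<..<T}"
  shows "((\<lambda>x. 2 * w x t * (vt x t - beta_lin' x t)) has_integral
      2 * (cross t + beta_x t * (mass t - alpha t)) - 2 * eps * gradient_deviation t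
      + 2 * eps * beta_x t * (deviation t + 2 * moment_beta t) - 2 * moment_beta' t) {0..1}"
proof -
  have t': "t \<in> {0..<T}" using t by auto
  have "((\<lambda>x. 2 * (w x t * ux x t) + 2 * eps * (w x t * vxx x t) + 4 * eps * (w x t * (v x t * vx x t))
      - 2 * (beta_lin' x t * w x t)) has_integral
      2 * (cross t + beta_x t * (mass t - alpha t)) + 2 * eps * - gradient_deviation t
      + 4 * eps * (beta_x t * (deviation t / 2 + moment_beta t)) - 2 * moment_beta' t) {0..1}"
    by (intro has_integral_add has_integral_diff has_integral_mult_right has_integral_w_ux
        has_integral_w_vxx has_integral_w_v_vx has_integral_densities t t')
  then have "((\<lambda>x. 2 * (w x t * ux x t) + 2 * eps * (w x t * vxx x t) + 4 * eps * (w x t * (v x t * vx x t))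
      - 2 * (beta_lin' x t * w x t)) has_integral
      2 * (cross t + beta_x t * (mass t - alpha t)) - 2 * eps * gradient_deviation t
      + 2 * eps * beta_x t * (deviation t + 2 * moment_beta t) - 2 * moment_beta' t) {0..1}"
    by (simp add: algebra_simps)
  then show ?thesis
    by (rule has_integral_eq_on_interior) (simp add: equations(2)[OF t] algebra_simps)
qed

lemma energy_has_derivative:
  assumes t: "t \<in> {0<..<T}"
  shows "(energy has_real_derivative forcing t - dissipation t) (at t)"
proof -
  have "(energy has_real_derivative (- cross t - fisher t - (mass t - alpha t) * alpha' t / alpha t)
      + (2 * (cross t + beta_x t * (mass t - alpha t)) - 2 * eps * gradient_deviation t
      + 2 * eps * beta_x t * (deviation t + 2 * moment_beta t) - 2 * moment_beta' t) / 2) (at t)"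
    unfolding energy_def[abs_def]
    using deviation_has_derivative[OF t]
    unfolding integral_unique[OF has_integral_deviation_production[OF t]]
    by (intro DERIV_add DERIV_cdivide entropy_has_derivative t)
  then show ?thesis
    by (rule DERIV_cong) (use alpha_pos[of t] t in \<open>simp add: forcing_def dissipation_def field_simps\<close>)
qed

section \<open>The energy estimate\<close>

lemma entropy_nonneg: "t \<in> {0..<T} \<Longrightarrow> 0 \<le> entropy t"
  by (rule has_integral_nonneg[OF has_integral_densities(1)])
    (auto intro!: entropy_density_nonneg u_pos alpha_pos)

lemma deviation_nonneg: "t \<in> {0..<T} \<Longrightarrow> 0 \<le> deviation t"
  by (rule has_integral_nonneg[OF has_integral_densities(2)]) auto

lemma mass_nonneg: "t \<in> {0..<T} \<Longrightarrow> 0 \<le> mass t"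
  by (rule has_integral_nonneg[OF has_integral_densities(3)]) (auto intro!: less_imp_le u_pos)

lemma dissipation_nonneg:
  assumes t: "t \<in> {0..<T}"
  shows "0 \<le> dissipation t"
proof -
  have "0 \<le> fisher t"
    by (rule has_integral_nonneg[OF has_integral_densities(4)[OF t]]) (use t in \<open>auto intro!: divide_nonneg_pos u_pos\<close>)
  moreover have "0 \<le> gradient_deviation t"
    by (rule has_integral_nonneg[OF has_integral_densities(5)[OF t]]) auto
  ultimately show ?thesis unfolding dissipation_def using eps_pos by simp
qed

lemma mass_le_entropy:
  assumes t: "t \<in> {0..<T}"
  shows "mass t \<le> entropy t + exp 2 * alpha t"
proof -
  have "((\<lambda>x. entropy_density (u x t) (alpha t) + exp 2 * alpha t) has_integral entropy t + exp 2 * alpha t) {0..1}"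
    using has_integral_add[OF has_integral_densities(1)[OF t] has_integral_const_real[of "exp 2 * alpha t" 0 1]]
    by simp
  then show ?thesis
    by (rule has_integral_le[OF has_integral_densities(3)[OF t]])
      (use t in \<open>auto intro!: le_entropy_density_add u_pos alpha_pos\<close>)
qed

lemma abs_moment_beta_le:
  assumes t: "t \<in> {0..<T}"
  shows "\<bar>moment_beta t\<bar> \<le> B * (1 + deviation t) / 2"
proof -
  have "\<bar>moment_beta t\<bar> \<le> B * (1 - 0 + deviation t) / 2"
    unfolding moment_beta_def deviation_def
    by (rule abs_integral_mult_le) (use t in \<open>auto intro: continuous_on_beta_lin continuous_on_w_slice abs_beta_lin_le\<close>)
  then show ?thesis by simp
qed

lemma abs_moment_beta'_le:
  assumes t: "t \<in> {0..<T}"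
  shows "\<bar>moment_beta' t\<bar> \<le> (\<bar>beta1' t\<bar> + \<bar>beta2' t\<bar>) * (1 + deviation t) / 2"
proof -
  have "\<bar>moment_beta' t\<bar> \<le> (\<bar>beta1' t\<bar> + \<bar>beta2' t\<bar>) * (1 - 0 + deviation t) / 2"
    unfolding moment_beta'_def deviation_def
    by (rule abs_integral_mult_le) (use t in \<open>auto intro: continuous_on_beta_lin continuous_on_w_slice abs_beta_lin'_le\<close>)
  then show ?thesis by simp
qed


lemma continuous_on_energy_terms:
  shows "continuous_on {0..<T} energy" "continuous_on {0..<T} fisher"
    and "continuous_on {0..<T} gradient_deviation"
proof -
  have S: "{0..<T} \<subseteq> {0..<T}" by simp
  note cont = continuous_on_time_space[OF S] nonzero_time_space[OF S]
  have "continuous_on {0..<T} entropy" unfolding entropy_def[abs_def] entropy_density_def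
    by (rule continuous_on_integral_param) (intro continuous_intros cont)
  moreover have "continuous_on {0..<T} deviation" unfolding deviation_def[abs_def] w_def beta_lin_def beta_x_def
    by (rule continuous_on_integral_param) (intro continuous_intros cont)
  ultimately show "continuous_on {0..<T} energy"
    unfolding energy_def[abs_def] by (intro continuous_intros) auto
  show "continuous_on {0..<T} fisher" unfolding fisher_def[abs_def]
    by (rule continuous_on_integral_param) (intro continuous_intros cont)
  show "continuous_on {0..<T} gradient_deviation" unfolding gradient_deviation_def[abs_def] beta_x_def
    by (rule continuous_on_integral_param) (intro continuous_intros cont)
qed

lemma continuous_on_dissipation: "continuous_on {0..<T} dissipation"
  unfolding dissipation_def[abs_def] by (intro continuous_intros continuous_on_energy_terms)

lemma energy_lower_bounds:
  assumes t: "t \<in> {0..<T}"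
  shows "0 \<le> energy t" "entropy t \<le> 1 + energy t" "deviation t + 2 \<le> 2 * (1 + energy t)"
  using entropy_nonneg[OF t] deviation_nonneg[OF t] by (auto simp: energy_def)

lemma abs_mass_diff_le:
  assumes t: "t \<in> {0..<T}"
  shows "\<bar>mass t - alpha t\<bar> \<le> (1 + (1 + exp 2) * amax) * (1 + energy t)"
proof -
  have alpha_t: "0 < alpha t" "alpha t \<le> amax" using t alpha_pos alpha_bounds by auto
  have "\<bar>mass t - alpha t\<bar> \<le> mass t + alpha t" using mass_nonneg[OF t] alpha_t by linarith
  also have "\<dots> \<le> entropy t + (1 + exp 2) * amax"
  proof -
    have "exp 2 * alpha t \<le> exp 2 * amax" using alpha_t by simp
    then show ?thesis using mass_le_entropy[OF t] alpha_t unfolding distrib_right by linarith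
  qed
  also have "\<dots> \<le> (1 + (1 + exp 2) * amax) * (1 + energy t)"
  proof -
    have "0 \<le> (1 + exp 2) * amax * energy t"
      using energy_lower_bounds(1)[OF t] amax_pos by simp
    moreover have "(1 + (1 + exp 2) * amax) * (1 + energy t)
        = 1 + energy t + (1 + exp 2) * amax + (1 + exp 2) * amax * energy t"
      by (simp add: algebra_simps)
    ultimately show ?thesis using energy_lower_bounds(2)[OF t] by linarith
  qed
  finally show ?thesis .
qed

lemma abs_deviation_moment_le:
  assumes t: "t \<in> {0..<T}"
  shows "\<bar>deviation t + 2 * moment_beta t\<bar> \<le> 2 * (1 + B) * (1 + energy t)"
proof -
  have "B * (deviation t + 2) \<le> B * (2 * (1 + energy t))"
    using energy_lower_bounds[OF t] B_nonneg by (intro mult_left_mono) auto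
  moreover have "\<bar>deviation t + 2 * moment_beta t\<bar> \<le> deviation t + 2 * \<bar>moment_beta t\<bar>"
    using deviation_nonneg[OF t] abs_triangle_ineq[of "deviation t" "2 * moment_beta t"] by simp
  ultimately show ?thesis
    using abs_moment_beta_le[OF t] energy_lower_bounds[OF t] B_nonneg by (simp add: algebra_simps)
qed

lemma abs_moment_beta'_le_energy:
  assumes t: "t \<in> {0..<T}"
  shows "\<bar>moment_beta' t\<bar> \<le> (\<bar>beta1' t\<bar> + \<bar>beta2' t\<bar>) * (1 + energy t)"
proof -
  have "\<bar>moment_beta' t\<bar> \<le> (\<bar>beta1' t\<bar> + \<bar>beta2' t\<bar>) * (1 + deviation t) / 2"
    by (rule abs_moment_beta'_le[OF t])
  also have "\<dots> \<le> (\<bar>beta1' t\<bar> + \<bar>beta2' t\<bar>) * (2 * (1 + energy t)) / 2"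
    using energy_lower_bounds(3)[OF t] by (intro divide_right_mono mult_left_mono) auto
  also have "\<dots> = (\<bar>beta1' t\<bar> + \<bar>beta2' t\<bar>) * (1 + energy t)" by simp
  finally show ?thesis .
qed

lemma forcing_le:
  assumes t: "t \<in> {0<..<T}"
  shows "forcing t \<le> growth_rate t * (1 + energy t)"
proof -
  have t': "t \<in> {0..<T}" and alpha_t: "0 < alpha t" "amin \<le> alpha t" using t alpha_pos alpha_bounds by auto
  have "\<bar>alpha' t / alpha t\<bar> \<le> \<bar>alpha' t\<bar> / amin"
    using alpha_t amin_pos by (simp add: divide_left_mono)
  then have coefficient: "\<bar>beta_x t - alpha' t / alpha t\<bar> \<le> \<bar>beta_x t\<bar> + \<bar>alpha' t\<bar> / amin" by linarith
  have eps_slope: "\<bar>eps * beta_x t\<bar> \<le> eps * \<bar>beta_x t\<bar>" using eps_pos by (simp add: abs_mult)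
  have "forcing t \<le> (\<bar>beta_x t\<bar> + \<bar>alpha' t\<bar> / amin) * ((1 + (1 + exp 2) * amax) * (1 + energy t))
      + eps * \<bar>beta_x t\<bar> * (2 * (1 + B) * (1 + energy t)) + (\<bar>beta1' t\<bar> + \<bar>beta2' t\<bar>) * (1 + energy t)"
    unfolding forcing_def
    using mult_le_of_abs_le[OF coefficient abs_mass_diff_le[OF t']]
      mult_le_of_abs_le[OF eps_slope abs_deviation_moment_le[OF t']] abs_moment_beta'_le_energy[OF t']
    by linarith
  also have "\<dots> = growth_rate t * (1 + energy t)"
    using amin_pos by (simp add: growth_rate_def field_simps)
  finally show ?thesis .
qed

lemma energy_dissipation_bound:
  assumes t: "t \<in> {0..<T}"
  shows "energy t + integral {0..t} dissipation \<le> (1 + energy 0) * exp (integral {0..t} growth_rate)"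
proof -
  have sub: "{0..t} \<subseteq> {0..<T}" using t by auto
  have diss_cont: "continuous_on {0..t} dissipation"
    by (rule continuous_on_subset[OF continuous_on_dissipation sub])
  define K where "K s = 1 + energy s + integral {0..s} dissipation" for s
  have diss_int_deriv: "((\<lambda>s. integral {0..s} dissipation) has_real_derivative dissipation s) (at s within {0..t})"
    if "s \<in> {0..t}" for s
    by (rule integral_has_real_derivative[OF diss_cont that])
  have diss_int_nonneg: "0 \<le> integral {0..s} dissipation" if "s \<in> {0..t}" for s
    using that t by (intro integral_nonneg integrable_continuous_interval continuous_on_subset[OF diss_cont])
      (auto intro: dissipation_nonneg)
  have "K t \<le> K 0 * exp (integral {0..t} growth_rate)"
  proof (rule gronwall_differential)
    show "0 \<le> t" using t by simp
    have "continuous_on {0..t} (\<lambda>s. integral {0..s} dissipation)"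
      using diss_int_deriv by (meson DERIV_continuous continuous_on_eq_continuous_within)
    then show "continuous_on {0..t} K" unfolding K_def
      by (intro continuous_intros continuous_on_subset[OF continuous_on_energy_terms(1) sub])
    show "continuous_on {0..t} growth_rate"
      by (rule continuous_on_subset[OF continuous_growth_rate]) auto
  next
    fix s assume s: "0 < s" "s < t"
    then have sT: "s \<in> {0<..<T}" and s': "s \<in> {0..t}" using t by auto
    have "((\<lambda>s. integral {0..s} dissipation) has_real_derivative dissipation s) (at s)"
      using diss_int_deriv[OF s'] s at_within_interior[of s "{0..t}"] by auto
    then have "(K has_real_derivative 0 + (forcing s - dissipation s) + dissipation s) (at s)"
      unfolding K_def by (intro DERIV_add DERIV_const energy_has_derivative sT)
    moreover have "forcing s \<le> growth_rate s * K s"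
    proof -
      have "growth_rate s * (1 + energy s) \<le> growth_rate s * K s"
        using diss_int_nonneg[OF s'] growth_rate_nonneg by (intro mult_left_mono) (auto simp: K_def)
      then show ?thesis using forcing_le[OF sT] by linarith
    qed
    ultimately show "\<exists>K'. (K has_real_derivative K') (at s) \<and> K' \<le> growth_rate s * K s" by auto
  qed
  then show ?thesis by (simp add: K_def)
qed

lemma energy_initial:
  "energy 0 = integral {0..1} (\<lambda>x. entropy_density (u0 x) (alpha 0))
     + integral {0..1} (\<lambda>x. (v0 x - beta_lin x 0)\<^sup>2) / 2"
proof -
  have "integral {0..1} (\<lambda>x. entropy_density (u x 0) (alpha 0))
      = integral {0..1} (\<lambda>x. entropy_density (u0 x) (alpha 0))"
    "integral {0..1} (\<lambda>x. (v x 0 - beta_lin x 0)\<^sup>2) = integral {0..1} (\<lambda>x. (v0 x - beta_lin x 0)\<^sup>2)"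
    by (auto intro!: integral_cong simp: initial_values)
  then show ?thesis unfolding energy_def entropy_def deviation_def w_def by simp
qed

lemma entropy_deviation_dissipation_bound:
  assumes t: "t \<in> {0..<T}"
  shows "entropy t + deviation t + integral {0..t} fisher + integral {0..t} (\<lambda>s. eps * gradient_deviation s)
    \<le> 2 * (1 + energy 0) * exp (integral {0..t} growth_rate)"
proof -
  have sub: "{0..t} \<subseteq> {0..<T}" using t by auto
  have "integral {0..t} dissipation = integral {0..t} fisher + integral {0..t} (\<lambda>s. eps * gradient_deviation s)"
    unfolding dissipation_def
    by (intro integral_add integrable_continuous_interval continuous_intros
        continuous_on_subset[OF continuous_on_energy_terms(2) sub] continuous_on_subset[OF continuous_on_energy_terms(3) sub])
  moreover have "0 \<le> integral {0..t} dissipation"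
    using t by (intro integral_nonneg integrable_continuous_interval continuous_on_subset[OF continuous_on_dissipation sub])
      (auto intro: dissipation_nonneg)
  ultimately show ?thesis
    using energy_dissipation_bound[OF t] entropy_nonneg[OF t] unfolding energy_def by linarith
qed

end

theorem lemma1:
  fixes eps :: real and alpha beta1 beta2 u0 v0 :: "real \<Rightarrow> real"
    and A B1 B2 :: "nat \<Rightarrow> real \<Rightarrow> real"
  assumes eps_pos: "eps > 0"
    and u0_pos: "\<forall>x\<in>{0..1}. u0 x > 0"
    and H2: "H2_01 u0" "H2_01 v0"
    and compat: "u0 0 = alpha 0" "u0 1 = alpha 0" "v0 0 = beta1 0" "v0 1 = beta2 0"
    and smoothA: "smooth_derivs_nonneg A alpha"
    and smoothB1: "smooth_derivs_nonneg B1 beta1"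
    and smoothB2: "smooth_derivs_nonneg B2 beta2"
    and alpha_lower: "\<exists>a>0. \<forall>t\<ge>0. alpha t \<ge> a"
    and alpha'_W11: "A 1 absolutely_integrable_on {0..}" "A 2 absolutely_integrable_on {0..}"
    and beta_diff_L1: "(\<lambda>t. beta1 t - beta2 t) absolutely_integrable_on {0..}"
    and beta1'_W11: "B1 1 absolutely_integrable_on {0..}" "B1 2 absolutely_integrable_on {0..}"
    and beta2'_W11: "B2 1 absolutely_integrable_on {0..}" "B2 2 absolutely_integrable_on {0..}"
  shows "\<exists>C>0. \<forall>T u v ux uxx ut vx vxx vt.
           classical_solution eps alpha beta1 beta2 u0 v0 T u v ux uxx ut vx vxx vt \<and>
           (\<forall>t\<in>{0..<T}. \<forall>x\<in>{0..1}. u x t > 0) \<longrightarrow>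
           (\<forall>t\<in>{0..<T}.
              rel_entropy (\<lambda>x. u x t) (alpha t)
              + integral {0..1} (\<lambda>x. (v x t - ((beta2 t - beta1 t) * x + beta1 t))^2)
              + integral {0..t} (\<lambda>\<tau>. integral {0..1} (\<lambda>x. (ux x \<tau>)^2 / u x \<tau>))
              + integral {0..t} (\<lambda>\<tau>. eps * integral {0..1} (\<lambda>x. (vx x \<tau> - (beta2 \<tau> - beta1 \<tau>))^2))
              \<le> C)"
proof -
  obtain amin amax B where "boundary_data eps alpha beta1 beta2 (A 1) (B1 1) (B2 1) amin amax B"
    using boundary_data_of_smooth[OF eps_pos alpha_lower smoothA smoothB1 smoothB2
        alpha'_W11(1) beta1'_W11(1) beta2'_W11(1)] by blast
  then interpret D: boundary_data eps alpha beta1 beta2 "A 1" "B1 1" "B2 1" amin amax B .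
  define G where "G = integral {0..} D.growth_rate"
  define F0 where "F0 = integral {0..1} (\<lambda>x. entropy_density (u0 x) (alpha 0))
     + integral {0..1} (\<lambda>x. (v0 x - D.beta_lin x 0)\<^sup>2) / 2"
  have rate_int: "D.growth_rate integrable_on {0..}"
    using D.growth_rate_integrable alpha'_W11(1) beta1'_W11(1) beta2'_W11(1) beta_diff_L1 by blast
  show ?thesis
  proof (intro exI[of _ "2 * (1 + \<bar>F0\<bar>) * exp G"] conjI allI impI ballI)
    show "0 < 2 * (1 + \<bar>F0\<bar>) * exp G" by (simp add: add_pos_nonneg)
    fix T u v ux uxx ut vx vxx vt t
    assume "classical_solution eps alpha beta1 beta2 u0 v0 T u v ux uxx ut vx vxx vt \<and>
        (\<forall>t\<in>{0..<T}. \<forall>x\<in>{0..1}. u x t > 0)" and t: "t \<in> {0..<T}"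
    then interpret S: positive_solution eps alpha beta1 beta2 "A 1" "B1 1" "B2 1" amin amax B
        u0 v0 T u v ux uxx ut vx vxx vt
      by unfold_locales auto
    have "integral {0..t} D.growth_rate \<le> G"
      unfolding G_def using t D.growth_rate_nonneg
      by (intro integral_subset_le integrable_on_subinterval[OF rate_int] rate_int) auto
    then have "2 * (1 + S.energy 0) * exp (integral {0..t} D.growth_rate) \<le> 2 * (1 + \<bar>F0\<bar>) * exp G"
      unfolding S.energy_initial F0_def[symmetric]
      using mult_mono[of "2 * (1 + F0)" "2 * (1 + \<bar>F0\<bar>)" "exp (integral {0..t} D.growth_rate)" "exp G"]
      by simp
    with S.entropy_deviation_dissipation_bound[OF t] show "rel_entropy (\<lambda>x. u x t) (alpha t)
        + integral {0..1} (\<lambda>x. (v x t - ((beta2 t - beta1 t) * x + beta1 t))^2)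
        + integral {0..t} (\<lambda>\<tau>. integral {0..1} (\<lambda>x. (ux x \<tau>)^2 / u x \<tau>))
        + integral {0..t} (\<lambda>\<tau>. eps * integral {0..1} (\<lambda>x. (vx x \<tau> - (beta2 \<tau> - beta1 \<tau>))^2))
        \<le> 2 * (1 + \<bar>F0\<bar>) * exp G"
      unfolding rel_entropy_def S.entropy_def S.deviation_def S.w_def D.beta_lin_def D.beta_x_def
        S.fisher_def[abs_def] S.gradient_deviation_def entropy_density_def by linarith
  qed
qed


end
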